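(* Let $A\in\mathbb{R}^{n\times n}$ and $B\in\mathbb{R}^{n\times m}$ define the discrete-time system $x^+=Ax+Bu$. Let $\mathrm{S}\in\mathbb{R}^{n_s\times n}$ be such that $\mathcal{S}:=\{x\in\mathbb{R}^n:\mathrm{S}x\le \mathbf{1}\}$ is a C-set, and let $\mathrm{U}\in\mathbb{R}^{n_u\times m}$ be such that $\mathcal{U}:=\{u\in\mathbb{R}^m:\mathrm{U}u\le\mathbf{1}\}$ (a polyhedral convex set containing the origin in its interior). Fix $\lambda\in[0,1)$. Let $u_d(0),\dots,u_d(T-1)\in\mathbb{R}^m$ be an input sequence and $x_d(0),\dots,x_d(T)\in\mathbb{R}^n$ the corresponding states with $x_d(k+1)=Ax_d(k)+Bu_d(k)$, and set $U_{0,T}:=[u_d(0)\ \cdots\ u_d(T-1)]$, $X_{0,T}:=[x_d(0)\ \cdots\ x_d(T-1)]$, $X_{1,T}:=[x_d(1)\ \cdots\ x_d(T)]$. Assume the matrix $\Theta:=\begin{bmatrix}U_{0,T}\\ X_{0,T}\end{bmatrix}$ has full row rank. Then there exists a matrix $K\in\mathbb{R}^{m\times n}$ such that $\mathcal{S}$ is $\lambda$-contractive for $x^+=(A+BK)x$ and admissible for $\mathcal{U}$ if and only if there exist matrices $G_K\in\mathbb{R}^{T\times n}$ and $P\in\mathbb{R}^{n_s\times n_s}$ with $P\ge0$ such that $P\mathbf{1}\le\lambda\mathbf{1}$, $\;P\mathrm{S}=\mathrm{S}X_{1,T}G_K$, $\;\mathrm{U}U_{0,T}G_K s\le\mathbf{1}$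 for all vertices $s$ of $\mathcal{S}$, and $I_n=X_{0,T}G_K$. Moreover, any such controller $K$ can be expressed as $K=U_{0,T}G_K$ for some $G_K$ satisfying these conditions (together with some $P\ge 0$).
   Context: $\mathbf{1}$ denotes the vector of all ones of appropriate dimension; inequalities between vectors/matrices are entrywise. A C-set is a convex compact subset of $\mathbb{R}^n$ containing the origin as an interior point. For $\mu\ge0$, $\mu\mathcal{S}:=\{\mu x:x\in\mathcal{S}\}$. A C-set $\mathcal{S}$ is $\lambda$-contractive for $x^+=Fx$ (with $\lambda\in[0,1)$) if for each $x\in\mathcal{S}$, $\inf\{\lambda'\ge0: Fx\in\lambda'\mathcal{S}\}\le\lambda$. $\mathcal{S}$ is admissible for $\mathcal{U}$ (with gain $K$) if $Kx\in\mathcal{U}$ for every $x\in\mathcal{S}$. *)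

theory Defs
  imports "HOL-Analysis.Analysis"
begin

definition C_set :: "('a::real_normed_vector) set \<Rightarrow> bool" where
  "C_set S \<longleftrightarrow> convex S \<and> compact S \<and> 0 \<in> interior S"

definition lam_contractive :: "('a::real_vector) set \<Rightarrow> ('a \<Rightarrow> 'a) \<Rightarrow> real \<Rightarrow> bool" where
  "lam_contractive S F lam \<longleftrightarrow>
     (\<forall>x\<in>S. Inf {l. l \<ge> 0 \<and> F x \<in> (\<lambda>y. l *\<^sub>R y) ` S} \<le> lam)"

definition admissible :: "(real^'n) set \<Rightarrow> (real^'m) set \<Rightarrow> real^'n^'m \<Rightarrow> bool" where
  "admissible S U K \<longleftrightarrow> (\<forall>x\<in>S. K *v x \<in> U)"

definition poly_set :: "real^'n^'k \<Rightarrow> (real^'n) set" where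
  "poly_set M = {x. M *v x \<le> 1}"

definition stack :: "real^'t^'m \<Rightarrow> real^'t^'n \<Rightarrow> real^'t^('m + 'n)" where
  "stack U X = (\<chi> i j. case i of Inl a \<Rightarrow> U $ a $ j | Inr b \<Rightarrow> X $ b $ j)"

end

theory Submission
  imports Defs
begin

text \<open>
  By an affine Farkas lemma, a linear map \<open>M\<close> sends the polyhedron \<open>{x. S x \<le> 1}\<close> into
  \<open>\<lambda>\<close> times itself iff \<open>P S = S M\<close> for some nonnegative \<open>P\<close> with row sums at most \<open>\<lambda>\<close>.
  For a bounded polyhedron, \<open>y \<in> l S\<close> iff \<open>S y \<le> l 1\<close> (also for \<open>l = 0\<close>), and the set of such
  \<open>l\<close> is closed, so the infimum defining \<open>\<lambda>\<close>-contractivity is attained and contractivity is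
  exactly this inclusion. By Krein-Milman, admissibility only has to be checked at the extreme
  points. Finally the data satisfy \<open>X\<^sub>1 = A X\<^sub>0 + B U\<^sub>0\<close>, and full row rank of \<open>[U\<^sub>0; X\<^sub>0]\<close>
  writes every gain as \<open>K = U\<^sub>0 G\<close> with \<open>X\<^sub>0 G = I\<close>, whence \<open>X\<^sub>1 G = A + B K\<close>.
\<close>

lemma matrix_vector_mult_nth_inner: "(M *v x) $ i = inner (M $ i) x"
  by (simp add: matrix_vector_mult_def inner_vec_def mult.commute)

lemma axis_vector_matrix_mult: "axis i 1 v* M = M $ i"
  by (simp add: vec_eq_iff vector_matrix_mult_def axis_def mult_delta_left)

lemma matrix_matrix_mult_row: "(A ** B) $ i = A $ i v* B"
  by (simp add: vec_eq_iff matrix_matrix_mult_def vector_matrix_mult_def)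

lemma matrix_add_rdistrib: "(A + B) ** C = A ** C + B ** C"
  by (simp add: vec_eq_iff matrix_matrix_mult_def sum.distrib distrib_right)

lemma nonneg_matrix_vector_mult_mono:
  fixes P :: "real^'n^'m"
  assumes "0 \<le> P" "x \<le> y"
  shows "P *v x \<le> P *v y"
  using assms unfolding less_eq_vec_def matrix_vector_mult_def
  by (auto intro!: sum_mono mult_left_mono)

lemma column_matrix_affine:
  assumes "\<And>j. f j = A *v g j + B *v h j"
  shows "(\<chi> i j. f j $ i) = A ** (\<chi> i j. g j $ i) + B ** (\<chi> i j. h j $ i)"
  using assms by (simp add: vec_eq_iff matrix_matrix_mult_def matrix_vector_mult_def)

lemma stack_matrix_mult: "stack U X ** G = stack (U ** G) (X ** G)"
  by (simp add: vec_eq_iff stack_def matrix_matrix_mult_def split: sum.split)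

lemma stack_eq_iff: "stack U X = stack U' X' \<longleftrightarrow> U = U' \<and> X = X'"
proof
  assume "stack U X = stack U' X'"
  then have "stack U X $ Inl a $ j = stack U' X' $ Inl a $ j"
    and "stack U X $ Inr b $ j = stack U' X' $ Inr b $ j" for a b j
    by simp_all
  then show "U = U' \<and> X = X'"
    by (simp add: vec_eq_iff stack_def)
qed simp

lemma full_row_rank_stack_solvable:
  fixes U :: "real^'t^'m" and X :: "real^'t^'n"
  assumes "rank (stack U X) = CARD('m) + CARD('n)"
  obtains G where "U ** G = K" "X ** G = L"
proof -
  have "surj ((*v) (stack U X))"
    using assms full_rank_surjective[of "stack U X"] by simp
  then obtain R where "stack U X ** R = mat 1"
    using matrix_right_invertible_surjective by blast
  then have "stack U X ** (R ** stack K L) = stack K L"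
    by (simp add: matrix_mul_assoc)
  then show thesis
    using that[of "R ** stack K L"] by (simp add: stack_matrix_mult stack_eq_iff)
qed

lemma separating_hyperplane_closed_cone:
  fixes z :: "'a::euclidean_space"
  assumes "convex_cone C" "closed C" "z \<notin> C"
  obtains a where "inner a z < 0" "\<And>x. x \<in> C \<Longrightarrow> 0 \<le> inner a x"
proof -
  obtain a b where ab: "inner a z < b" "\<forall>x\<in>C. b < inner a x"
    using separating_hyperplane_closed_point assms convex_cone_def by metis
  have "b < 0"
    using ab(2) convex_cone_contains_0[OF assms(1)] by fastforce
  have nonneg: "0 \<le> inner a x" if "x \<in> C" for x
  proof (rule ccontr)
    assume "\<not> 0 \<le> inner a x"
    then have "(b / inner a x) *\<^sub>R x \<in> C"
      using \<open>b < 0\<close> \<open>x \<in> C\<close> assms(1) by (simp add: convex_cone_iff divide_nonpos_neg)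
    moreover have "inner a ((b / inner a x) *\<^sub>R x) = b"
      using \<open>\<not> 0 \<le> inner a x\<close> by simp
    ultimately show False
      using ab(2) by fastforce
  qed
  show thesis
    by (rule that[of a]) (use ab(1) \<open>b < 0\<close> nonneg in auto)
qed

lemma implied_inequality_dual_nonneg:
  fixes Sm :: "real^'n^'s"
  assumes H: "\<And>x. Sm *v x \<le> 1 \<Longrightarrow> inner c x \<le> lam"
    and "0 \<le> t" and rows: "\<And>i. 0 \<le> inner (Sm $ i) y + t"
  shows "0 \<le> inner c y + lam * t"
proof (rule ccontr)
  assume cy: "\<not> 0 \<le> inner c y + lam * t"
  have scaled: "- s * inner c y \<le> lam" if "0 \<le> s" "s * t \<le> 1" for s
  proof -
    have "Sm *v (- s *\<^sub>R y) \<le> 1"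
    proof (unfold less_eq_vec_def, rule allI)
      fix i
      have "- s * inner (Sm $ i) y \<le> s * t"
        using mult_left_mono[OF rows[of i] \<open>0 \<le> s\<close>] by (simp add: algebra_simps)
      then show "(Sm *v (- s *\<^sub>R y)) $ i \<le> 1 $ i"
        using that by (simp add: matrix_vector_mult_nth_inner)
    qed
    from H[OF this] show ?thesis
      by simp
  qed
  show False
  proof (cases "t = 0")
    case True
    have "0 \<le> lam"
      using H[of 0] by (simp add: less_eq_vec_def)
    with True cy have "0 < (lam + 1) / - inner c y"
      by (simp add: divide_pos_neg)
    with True scaled[of "(lam + 1) / - inner c y"] cy show False
      by simp
  next
    case False
    with \<open>0 \<le> t\<close> have "0 < t"
      by simp
    with scaled[of "1 / t"] have "- inner c y \<le> lam * t"
      by (simp add: field_simps)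
    with cy show False
      by simp
  qed
qed

lemma convex_cone_nonneg_row_combinations:
  fixes Sm :: "real^'n^'s"
  shows "convex_cone {(p v* Sm, t) | p t. 0 \<le> p \<and> sum (($) p) UNIV \<le> t}"
    (is "convex_cone ?K")
  unfolding convex_cone_iff
proof (intro conjI ballI allI impI)
  show "0 \<in> ?K"
    by (intro CollectI exI[of _ 0] exI[of _ 0]) (simp add: zero_prod_def)
next
  fix x z assume "x \<in> ?K" "z \<in> ?K"
  then obtain p t q u where "x = (p v* Sm, t)" "0 \<le> p" "sum (($) p) UNIV \<le> t"
    and "z = (q v* Sm, u)" "0 \<le> q" "sum (($) q) UNIV \<le> u"
    by blast
  then show "x + z \<in> ?K"
    by (intro CollectI exI[of _ "p + q"] exI[of _ "t + u"])
      (simp add: vector_matrix_mult_def vec_eq_iff sum.distrib distrib_right add_mono)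
next
  fix x and r :: real assume "x \<in> ?K" "0 \<le> r"
  then obtain p t where "x = (p v* Sm, t)" "0 \<le> p" "sum (($) p) UNIV \<le> t"
    by blast
  with \<open>0 \<le> r\<close> show "r *\<^sub>R x \<in> ?K"
    by (intro CollectI exI[of _ "r *\<^sub>R p"] exI[of _ "r * t"])
      (simp add: vector_matrix_mult_def vec_eq_iff mult.assoc mult_left_mono less_eq_vec_def
        flip: sum_distrib_left)
qed

lemma farkas_affine:
  fixes Sm :: "real^'n^'s" and c :: "real^'n"
  assumes H: "\<And>x. Sm *v x \<le> 1 \<Longrightarrow> inner c x \<le> lam"
  shows "\<exists>p. 0 \<le> p \<and> sum (($) p) UNIV \<le> lam \<and> p v* Sm = c"
proof -
  define D :: "((real^'n) \<times> real) set" where "D = insert (0, 1) (range (\<lambda>i. (Sm $ i, 1)))"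
  define K :: "((real^'n) \<times> real) set" where
    "K = {(p v* Sm, t) | p t. 0 \<le> p \<and> sum (($) p) UNIV \<le> t}"
  have "(c, lam) \<in> convex_cone hull D"
  proof (rule ccontr)
    assume "(c, lam) \<notin> convex_cone hull D"
    moreover have "finite D"
      unfolding D_def by simp
    ultimately obtain y t where yt: "inner (y, t) (c, lam) < 0" "\<And>d. d \<in> D \<Longrightarrow> 0 \<le> inner (y, t) d"
      by (metis separating_hyperplane_closed_cone convex_cone_convex_cone_hull
          closed_convex_cone_hull hull_inc surj_pair)
    have "0 \<le> t"
      using yt(2)[of "(0, 1)"] by (simp add: D_def)
    moreover have "0 \<le> inner (Sm $ i) y + t" for i
      using yt(2)[of "(Sm $ i, 1)"] by (simp add: D_def inner_commute)
    ultimately have "0 \<le> inner c y + lam * t"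
      using H implied_inequality_dual_nonneg by blast
    with yt(1) show False
      by (simp add: inner_commute mult.commute)
  qed
  moreover have "convex_cone hull D \<subseteq> K"
  proof (rule hull_minimal)
    have "(Sm $ i, 1) \<in> K" for i
      unfolding K_def
      by (intro CollectI exI[of _ "axis i 1"] exI[of _ 1])
        (simp add: axis_vector_matrix_mult, simp add: less_eq_vec_def axis_def)
    moreover have "(0, 1) \<in> K"
      unfolding K_def by (intro CollectI exI[of _ 0] exI[of _ 1]) simp
    ultimately show "D \<subseteq> K"
      unfolding D_def by blast
    show "convex_cone K"
      unfolding K_def by (rule convex_cone_nonneg_row_combinations)
  qed
  ultimately show ?thesis
    unfolding K_def by blast
qed

lemma farkas_affine_matrix:
  fixes Sm :: "real^'n^'s" and H :: "real^'n^'r"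
  shows "(\<forall>x. Sm *v x \<le> 1 \<longrightarrow> H *v x \<le> lam *\<^sub>R 1) \<longleftrightarrow>
         (\<exists>P::real^'s^'r. 0 \<le> P \<and> P *v 1 \<le> lam *\<^sub>R 1 \<and> P ** Sm = H)"
proof
  assume H: "\<forall>x. Sm *v x \<le> 1 \<longrightarrow> H *v x \<le> lam *\<^sub>R 1"
  have "\<exists>p. 0 \<le> p \<and> sum (($) p) UNIV \<le> lam \<and> p v* Sm = H $ r" for r
    by (rule farkas_affine) (use H in \<open>auto simp: less_eq_vec_def matrix_vector_mult_nth_inner\<close>)
  then obtain p where p: "\<And>r. 0 \<le> p r \<and> sum (($) (p r)) UNIV \<le> lam \<and> p r v* Sm = H $ r"
    by metis
  show "\<exists>P::real^'s^'r. 0 \<le> P \<and> P *v 1 \<le> lam *\<^sub>R 1 \<and> P ** Sm = H"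
    by (rule exI[of _ "\<chi> r. p r"])
      (use p in \<open>auto simp: less_eq_vec_def matrix_vector_mult_def vec_eq_iff matrix_matrix_mult_row\<close>)
next
  assume "\<exists>P::real^'s^'r. 0 \<le> P \<and> P *v 1 \<le> lam *\<^sub>R 1 \<and> P ** Sm = H"
  then obtain P :: "real^'s^'r" where P: "0 \<le> P" "P *v 1 \<le> lam *\<^sub>R 1" "P ** Sm = H"
    by blast
  show "\<forall>x. Sm *v x \<le> 1 \<longrightarrow> H *v x \<le> lam *\<^sub>R 1"
  proof (intro allI impI)
    fix x assume "Sm *v x \<le> 1"
    have "H *v x = P *v (Sm *v x)"
      using P(3) by (simp add: matrix_vector_mul_assoc)
    also have "\<dots> \<le> P *v 1"
      using P(1) \<open>Sm *v x \<le> 1\<close> by (rule nonneg_matrix_vector_mult_mono)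
    finally show "H *v x \<le> lam *\<^sub>R 1"
      using P(2) by order
  qed
qed

lemma convex_poly_set: "convex (poly_set M)"
proof -
  have "poly_set M = (\<Inter>i. {x. inner (M $ i) x \<le> 1})"
    by (auto simp: poly_set_def less_eq_vec_def matrix_vector_mult_nth_inner)
  then show ?thesis
    by (simp add: convex_INT convex_halfspace_le)
qed

lemma bounded_poly_set_nonpos_eq_0:
  assumes "bounded (poly_set M)" "M *v y \<le> 0"
  shows "y = 0"
proof (rule ccontr)
  assume "y \<noteq> 0"
  obtain b where b: "\<And>x. x \<in> poly_set M \<Longrightarrow> norm x \<le> b"
    using assms(1) bounded_iff by blast
  define t where "t = (\<bar>b\<bar> + 1) / norm y"
  have "0 \<le> t"
    unfolding t_def by simp
  have "t *\<^sub>R y \<in> poly_set M"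
    unfolding poly_set_def less_eq_vec_def
  proof (intro CollectI allI)
    fix i
    have "t * (M *v y) $ i \<le> 0"
      using assms(2) \<open>0 \<le> t\<close> by (simp add: less_eq_vec_def mult_nonneg_nonpos)
    then show "(M *v (t *\<^sub>R y)) $ i \<le> 1 $ i"
      by (simp add: matrix_vector_mult_scaleR)
  qed
  then have "norm (t *\<^sub>R y) \<le> b"
    by (rule b)
  moreover have "norm (t *\<^sub>R y) = \<bar>b\<bar> + 1"
    unfolding t_def using \<open>y \<noteq> 0\<close> by simp
  ultimately show False
    by simp
qed

lemma poly_set_scaled_iff:
  assumes "bounded (poly_set M)" "0 \<le> l"
  shows "y \<in> (\<lambda>z. l *\<^sub>R z) ` poly_set M \<longleftrightarrow> M *v y \<le> l *\<^sub>R 1"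
proof (cases "l = 0")
  case True
  have "0 \<in> poly_set M"
    by (simp add: poly_set_def less_eq_vec_def)
  then show ?thesis
    using True bounded_poly_set_nonpos_eq_0[OF assms(1)] by auto
next
  case False
  with assms(2) have "0 < l"
    by simp
  have "y \<in> (\<lambda>z. l *\<^sub>R z) ` poly_set M \<longleftrightarrow> inverse l *\<^sub>R y \<in> poly_set M"
    using \<open>0 < l\<close> by (auto simp: image_iff intro: bexI[of _ "inverse l *\<^sub>R y"])
  also have "\<dots> \<longleftrightarrow> M *v y \<le> l *\<^sub>R 1"
    using \<open>0 < l\<close>
    by (simp add: poly_set_def less_eq_vec_def matrix_vector_mult_scaleR field_simps)
  finally show ?thesis .
qed

lemma lam_contractive_poly_set_iff:
  assumes "bounded (poly_set M)" "0 \<le> lam"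
  shows "lam_contractive (poly_set M) F lam \<longleftrightarrow> (\<forall>x \<in> poly_set M. M *v F x \<le> lam *\<^sub>R 1)"
proof -
  have "Inf {l. 0 \<le> l \<and> F x \<in> (\<lambda>y. l *\<^sub>R y) ` poly_set M} \<le> lam \<longleftrightarrow> M *v F x \<le> lam *\<^sub>R 1"
    for x
  proof -
    define L where "L = {l. 0 \<le> l \<and> M *v F x \<le> l *\<^sub>R 1}"
    have "{l. 0 \<le> l \<and> F x \<in> (\<lambda>y. l *\<^sub>R y) ` poly_set M} = L"
      unfolding L_def using poly_set_scaled_iff[OF assms(1)] by blast
    moreover have "Inf L \<in> L"
    proof (rule closed_contains_Inf)
      have "norm (M *v F x) \<in> L"
        unfolding L_def using component_le_norm_cart by (auto simp: less_eq_vec_def abs_le_iff)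
      then show "L \<noteq> {}"
        by blast
      show "bdd_below L"
        unfolding L_def by (rule bdd_belowI[of _ 0]) simp
      show "closed L"
        unfolding L_def less_eq_vec_def
        by (intro closed_Collect_conj closed_Collect_all closed_Collect_le continuous_intros)
    qed
    moreover have "bdd_below L"
      unfolding L_def by (rule bdd_belowI[of _ 0]) simp
    ultimately show ?thesis
      using assms(2) unfolding L_def
      by (auto simp: less_eq_vec_def intro: cInf_lower order_trans)
  qed
  then show ?thesis
    by (simp add: lam_contractive_def)
qed

lemma lam_contractive_linear_poly_set_iff:
  fixes Sm :: "real^'n^'s" and M :: "real^'n^'n"
  assumes "bounded (poly_set Sm)" "0 \<le> lam"
  shows "lam_contractive (poly_set Sm) (\<lambda>x. M *v x) lam \<longleftrightarrow>
         (\<exists>P::real^'s^'s. 0 \<le> P \<and> P *v 1 \<le> lam *\<^sub>R 1 \<and> P ** Sm = Sm ** M)"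
  using lam_contractive_poly_set_iff[OF assms] farkas_affine_matrix[of Sm "Sm ** M" lam]
  by (simp add: poly_set_def matrix_vector_mul_assoc)

lemma subset_convex_iff_extreme_points:
  fixes S :: "'a::euclidean_space set"
  assumes "compact S" "convex S" "convex T"
  shows "S \<subseteq> T \<longleftrightarrow> {x. x extreme_point_of S} \<subseteq> T"
proof
  assume "{x. x extreme_point_of S} \<subseteq> T"
  then have "convex hull {x. x extreme_point_of S} \<subseteq> T"
    using assms(3) by (rule hull_minimal)
  then show "S \<subseteq> T"
    using Krein_Milman_Minkowski[OF assms(1,2)] by simp
qed (auto simp: extreme_point_of_def)

lemma admissible_poly_set_iff:
  assumes "compact (poly_set Sm)"
  shows "admissible (poly_set Sm) (poly_set Um) K \<longleftrightarrow>
         (\<forall>s. s extreme_point_of poly_set Sm \<longrightarrow> (Um ** K) *v s \<le> 1)"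
proof -
  have "admissible (poly_set Sm) (poly_set Um) K \<longleftrightarrow> poly_set Sm \<subseteq> poly_set (Um ** K)"
    by (auto simp: admissible_def poly_set_def matrix_vector_mul_assoc)
  also have "\<dots> \<longleftrightarrow> {s. s extreme_point_of poly_set Sm} \<subseteq> poly_set (Um ** K)"
    using assms by (intro subset_convex_iff_extreme_points convex_poly_set)
  finally show ?thesis
    by (auto simp: poly_set_def)
qed

theorem theorem2:
  fixes A :: "real^'n^'n" and B :: "real^'m^'n"
    and Sm :: "real^'n^'s" and Um :: "real^'m^'u"
    and lam :: real
    and ud :: "nat \<Rightarrow> real^'m" and xd :: "nat \<Rightarrow> real^'n"
    and tix :: "'t::finite \<Rightarrow> nat"
    and U0 :: "real^'t^'m" and X0 :: "real^'t^'n" and X1 :: "real^'t^'n"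
  assumes Cset: "C_set (poly_set Sm)"
    and Uint: "0 \<in> interior (poly_set Um)"
    and lam: "0 \<le> lam" "lam < 1"
    and dyn: "\<And>k. k < CARD('t) \<Longrightarrow> xd (Suc k) = A *v xd k + B *v ud k"
    and tix: "bij_betw tix UNIV {..<CARD('t)}"
    and U0_def: "U0 = (\<chi> i j. ud (tix j) $ i)"
    and X0_def: "X0 = (\<chi> i j. xd (tix j) $ i)"
    and X1_def: "X1 = (\<chi> i j. xd (Suc (tix j)) $ i)"
    and rank: "rank (stack U0 X0) = CARD('m) + CARD('n)"
  shows "((\<exists>K :: real^'n^'m.
            lam_contractive (poly_set Sm) (\<lambda>x. (A + B ** K) *v x) lam \<and>
            admissible (poly_set Sm) (poly_set Um) K)
          \<longleftrightarrow>
          (\<exists>(G :: real^'n^'t) (P :: real^'s^'s).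
            0 \<le> P \<and> P *v 1 \<le> lam *\<^sub>R 1 \<and> P ** Sm = Sm ** X1 ** G \<and>
            (\<forall>s. s extreme_point_of (poly_set Sm) \<longrightarrow> (Um ** U0 ** G) *v s \<le> 1) \<and>
            mat 1 = X0 ** G))
       \<and> (\<forall>K :: real^'n^'m.
            lam_contractive (poly_set Sm) (\<lambda>x. (A + B ** K) *v x) lam \<and>
            admissible (poly_set Sm) (poly_set Um) K \<longrightarrow>
            (\<exists>(G :: real^'n^'t) (P :: real^'s^'s).
              0 \<le> P \<and> P *v 1 \<le> lam *\<^sub>R 1 \<and> P ** Sm = Sm ** X1 ** G \<and>
              (\<forall>s. s extreme_point_of (poly_set Sm) \<longrightarrow> (Um ** U0 ** G) *v s \<le> 1) \<and>
              mat 1 = X0 ** G \<and> K = U0 ** G))"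
proof -
  have compact: "compact (poly_set Sm)"
    using Cset by (simp add: C_set_def)
  have "X1 = A ** X0 + B ** U0"
    unfolding X1_def X0_def U0_def
    by (rule column_matrix_affine) (metis dyn tix bij_betwE UNIV_I lessThan_iff)
  then have closed_loop: "X1 ** G = A + B ** (U0 ** G)" if "mat 1 = X0 ** G" for G
    by (simp add: matrix_add_rdistrib that[symmetric] flip: matrix_mul_assoc)
  let ?Q = "\<lambda>K. lam_contractive (poly_set Sm) (\<lambda>x. (A + B ** K) *v x) lam \<and>
    admissible (poly_set Sm) (poly_set Um) K"
  let ?C = "\<lambda>G P. 0 \<le> P \<and> P *v 1 \<le> lam *\<^sub>R 1 \<and> P ** Sm = Sm ** X1 ** G \<and>
    (\<forall>s. s extreme_point_of (poly_set Sm) \<longrightarrow> (Um ** U0 ** G) *v s \<le> 1) \<and> mat 1 = X0 ** G"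
  have controller_iff: "?Q K \<longleftrightarrow>
      (\<exists>P. 0 \<le> P \<and> P *v 1 \<le> lam *\<^sub>R 1 \<and> P ** Sm = Sm ** (A + B ** K)) \<and>
      (\<forall>s. s extreme_point_of poly_set Sm \<longrightarrow> (Um ** K) *v s \<le> 1)" for K
    using lam_contractive_linear_poly_set_iff[OF compact_imp_bounded[OF compact] lam(1)]
      admissible_poly_set_iff[OF compact] by blast
  have data_iff: "(\<exists>P. ?C G P) \<longleftrightarrow> mat 1 = X0 ** G \<and> ?Q (U0 ** G)" for G
    unfolding controller_iff using closed_loop by (auto simp flip: matrix_mul_assoc)
  have "\<exists>G. K = U0 ** G \<and> mat 1 = X0 ** G" for K :: "real^'n^'m"
    using full_row_rank_stack_solvable[OF rank] by metis
  then have "?Q K \<Longrightarrow> \<exists>G P. ?C G P \<and> K = U0 ** G" for K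
    using data_iff by metis
  with data_iff show ?thesis
    by blast
qed

end
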